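(* Let $T$ be a tree with $n$ vertices and matching number $\beta$. Then $$S_{k}(A(T))\leq \begin{cases} \sqrt{k(n-1)}, & \text{if } 1\leq k \leq \beta;\\ \sqrt{\beta (n-1)}, & \text{if } \beta< k \leq n-\beta;\\ \sqrt{(n-k)(n-1)}, & \text{if } n-\beta< k \leq n. \end{cases}$$
   Context: $A(T)$ is the adjacency matrix of $T$. For a real symmetric matrix $M$ with eigenvalues $\lambda_1(M)\geq\cdots\geq\lambda_n(M)$, $S_k(M)=\sum_{i=1}^k\lambda_i(M)$. The matching number is the maximum size of a matching. *)

theory Defs
  imports "HOL-Analysis.Analysis" "Jordan_Normal_Form.Char_Poly"
begin

definition simple_graph :: "nat \<Rightarrow> nat set set \<Rightarrow> bool" where
  "simple_graph n E \<longleftrightarrow> (\<forall>e\<in>E. \<exists>u v. u < n \<and> v < n \<and> u \<noteq> v \<and> e = {u, v})"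

definition graph_connected :: "nat \<Rightarrow> nat set set \<Rightarrow> bool" where
  "graph_connected n E \<longleftrightarrow>
     (\<forall>u<n. \<forall>v<n. (\<lambda>x y. {x, y} \<in> E)\<^sup>*\<^sup>* u v)"

definition is_tree :: "nat \<Rightarrow> nat set set \<Rightarrow> bool" where
  "is_tree n E \<longleftrightarrow> n \<ge> 1 \<and> simple_graph n E \<and> graph_connected n E \<and> card E = n - 1"

definition is_matching :: "nat set set \<Rightarrow> nat set set \<Rightarrow> bool" where
  "is_matching E M \<longleftrightarrow> M \<subseteq> E \<and> (\<forall>e\<in>M. \<forall>f\<in>M. e \<noteq> f \<longrightarrow> e \<inter> f = {})"

definition matching_number :: "nat set set \<Rightarrow> nat" where
  "matching_number E = Max (card ` {M. is_matching E M})"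

definition adj_matrix :: "nat \<Rightarrow> nat set set \<Rightarrow> real mat" where
  "adj_matrix n E = mat n n (\<lambda>(i, j). if {i, j} \<in> E then 1 else 0)"

text \<open>Eigenvalues (with multiplicity) of a real square matrix whose characteristic
  polynomial splits over the reals (e.g. a real symmetric matrix), listed in
  non-increasing order: lambda_1 >= ... >= lambda_n.\<close>
definition eigenvalues_desc :: "real mat \<Rightarrow> real list" where
  "eigenvalues_desc A = (SOME ls. length ls = dim_row A \<and> sorted_wrt (\<ge>) ls \<and>
      char_poly A = (\<Prod>l\<leftarrow>ls. [:- l, 1:]))"

definition S_k :: "nat \<Rightarrow> real mat \<Rightarrow> real" where
  "S_k k A = sum_list (take k (eigenvalues_desc A))"

end

theory Submission
  imports Defs "Jordan_Normal_Form.Schur_Decomposition"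
begin

(*
  Let l_1 >= ... >= l_n be the eigenvalues of the adjacency matrix A of the tree. Their squares
  sum to tr(A^2) = 2 (n - 1). A tree is bipartite, and conjugating A by the diagonal sign matrix
  of a 2-colouring gives -A, so the spectrum is symmetric about 0 and S_k = S_(n-k). At most
  2 beta eigenvalues are nonzero: if 0 has multiplicity z, the coefficient of x^z in det (x I - A)
  is nonzero, so some permutation moves n - z vertices, each to a neighbour, and the moved
  vertices of either colour class index a matching. Hence at most min k beta of l_1, ..., l_k are
  positive, their squares sum to at most n - 1, and Cauchy-Schwarz gives
  S_k <= sqrt (min k beta * (n - 1)); for k > n - beta use S_k = S_(n-k).
*)

section \<open>Real lists with a spectrum symmetric about zero\<close>

lemma sum_list_square_le:
  fixes xs :: "real list"
  shows "(sum_list xs)\<^sup>2 \<le> real (length xs) * sum_list (map (\<lambda>x. x\<^sup>2) xs)"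
proof -
  have "(sum_list xs)\<^sup>2 = (\<Sum>i<length xs. xs ! i)\<^sup>2"
    by (simp add: sum_list_sum_nth atLeast0LessThan)
  also have "\<dots> \<le> (\<Sum>i<length xs. (xs ! i)\<^sup>2) * real (card {..<length xs})"
    by (rule sum_squared_le_sum_of_squares)
  also have "(\<Sum>i<length xs. (xs ! i)\<^sup>2) = sum_list (map (\<lambda>x. x\<^sup>2) xs)"
    by (simp add: sum_list_sum_nth atLeast0LessThan)
  finally show ?thesis
    by (simp add: mult.commute)
qed

lemma sum_list_le_sum_list_filter_pos:
  fixes xs :: "real list"
  shows "sum_list xs \<le> sum_list (filter (\<lambda>x. 0 < x) xs)"
  by (induction xs) auto

lemma mset_filter_neg_eq_uminus_filter_pos:
  fixes xs :: "'a::linordered_idom list"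
  assumes "mset (map uminus xs) = mset xs"
  shows "mset (filter (\<lambda>x. x < 0) xs) = image_mset uminus (mset (filter (\<lambda>x. 0 < x) xs))"
proof -
  have "mset (filter (\<lambda>x. x < 0) xs) = filter_mset (\<lambda>x. x < 0) (mset (map uminus xs))"
    using assms by simp
  then show ?thesis
    by (simp add: filter_mset_image_mset)
qed

lemma sum_list_take_le_sqrt:
  fixes xs :: "real list"
  assumes symmetric: "mset (map uminus xs) = mset xs"
    and squares: "sum_list (map (\<lambda>x. x\<^sup>2) xs) \<le> 2 * c"
    and nonzero: "length (filter (\<lambda>x. x \<noteq> 0) xs) \<le> 2 * b"
  shows "sum_list (take k xs) \<le> sqrt (real (min k b) * c)"
proof -
  let ?sq = "\<lambda>ys. sum_list (map (\<lambda>x::real. x\<^sup>2) ys)"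
  define pos where "pos = filter (\<lambda>x. 0 < x) xs"
  define neg where "neg = filter (\<lambda>x. x < 0) xs"
  have neg: "mset neg = image_mset uminus (mset pos)"
    unfolding neg_def pos_def by (rule mset_filter_neg_eq_uminus_filter_pos[OF symmetric])
  have "length (filter (\<lambda>x. x \<noteq> 0) xs) = length pos + length neg"
    unfolding pos_def neg_def by (induction xs) auto
  also have "length neg = length pos"
    by (metis neg size_image_mset size_mset)
  finally have "length pos \<le> b"
    using nonzero by simp
  have "?sq xs = ?sq pos + ?sq neg"
    unfolding pos_def neg_def by (induction xs) auto
  also have "?sq neg = ?sq pos"
    by (metis (no_types, lifting) neg mset_map multiset.map_comp comp_def power2_minus
        sum_mset_sum_list image_mset_cong)
  finally have "?sq pos \<le> c"
    using squares by simp
  define pos_k where "pos_k = filter (\<lambda>x. 0 < x) (take k xs)"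
  have pos_split: "pos = pos_k @ filter (\<lambda>x. 0 < x) (drop k xs)"
    unfolding pos_def pos_k_def by (metis append_take_drop_id filter_append)
  have "length pos_k \<le> min k b"
    using \<open>length pos \<le> b\<close> length_filter_le[of "\<lambda>x. 0 < x" "take k xs"]
    by (simp add: pos_split pos_k_def[symmetric])
  moreover have "?sq pos_k \<le> c"
  proof -
    have "0 \<le> ?sq (filter (\<lambda>x. 0 < x) (drop k xs))"
      by (rule sum_list_nonneg) auto
    then show ?thesis
      using \<open>?sq pos \<le> c\<close> by (simp add: pos_split)
  qed
  moreover have "0 \<le> ?sq pos_k"
    by (rule sum_list_nonneg) auto
  ultimately have "real (length pos_k) * ?sq pos_k \<le> real (min k b) * c"
    by (intro mult_mono) auto
  then have "(sum_list pos_k)\<^sup>2 \<le> real (min k b) * c"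
    using sum_list_square_le[of pos_k] by linarith
  then have "sum_list pos_k \<le> sqrt (real (min k b) * c)"
    by (rule real_le_rsqrt)
  then show ?thesis
    using sum_list_le_sum_list_filter_pos[of "take k xs"] unfolding pos_k_def by linarith
qed

lemma sum_list_take_eq_sum_list_take_complement:
  fixes xs :: "'a::linordered_idom list"
  assumes sorted: "sorted_wrt (\<ge>) xs"
    and symmetric: "mset (map uminus xs) = mset xs"
    and k: "k \<le> length xs"
  shows "sum_list (take k xs) = sum_list (take (length xs - k) xs)"
proof -
  have sum_list_uminus: "sum_list (map uminus ys) = - sum_list ys" for ys :: "'a list"
    by (induction ys) auto
  have "sort (rev xs) = rev xs"
    using sorted by (simp add: sorted_wrt_rev sorted_sort_id)
  moreover have "sort (rev xs) = map uminus xs"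
    by (rule properties_for_sort) (use symmetric sorted in \<open>auto simp: sorted_wrt_map\<close>)
  ultimately have rev: "rev xs = map uminus xs"
    by simp
  have "sum_list (drop k xs) = sum_list (drop k (rev (map uminus xs)))"
    using rev by (metis rev_rev_ident)
  also have "\<dots> = - sum_list (take (length xs - k) xs)"
    by (simp add: drop_rev take_map sum_list_uminus)
  finally have "sum_list (drop k xs) = - sum_list (take (length xs - k) xs)" .
  moreover have "sum_list xs = 0"
    using symmetric by (metis sum_mset_sum_list sum_list_uminus neg_equal_zero)
  moreover have "sum_list xs = sum_list (take k xs) + sum_list (drop k xs)"
    by (metis append_take_drop_id sum_list_append)
  ultimately show ?thesis
    by simp
qed

section \<open>Products of linear factors\<close>

lemma order_prod_linear_factors:
  fixes xs :: "'a::idom list"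
  shows "Polynomial.order a (\<Prod>x\<leftarrow>xs. [:- x, 1:]) = count (mset xs) a"
proof (induction xs)
  case (Cons x xs)
  have "(\<Prod>y\<leftarrow>x # xs. [:- y, 1:]) \<noteq> 0"
    unfolding prod_list_zero_iff by auto
  then have "Polynomial.order a (\<Prod>y\<leftarrow>x # xs. [:- y, 1:]) =
      Polynomial.order a [:- x, 1:] + Polynomial.order a (\<Prod>y\<leftarrow>xs. [:- y, 1:])"
    by (simp only: list.map prod_list.Cons) (erule order_mult)
  moreover have "Polynomial.order a [:- x, 1:] = (if a = x then 1 else 0)"
    using order_power_n_n[of a 1] by (auto intro: order_0I)
  ultimately show ?case
    using Cons by simp
qed simp

lemma mset_eq_if_prod_linear_factors_eq:
  fixes xs ys :: "'a::idom list"
  assumes "(\<Prod>x\<leftarrow>xs. [:- x, 1:]) = (\<Prod>y\<leftarrow>ys. [:- y, 1:])"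
  shows "mset xs = mset ys"
  by (rule multiset_eqI) (metis assms order_prod_linear_factors)

lemma coeff_order_0_nonzero:
  fixes p :: "'a::idom poly"
  assumes "p \<noteq> 0"
  shows "coeff p (Polynomial.order 0 p) \<noteq> 0"
proof -
  obtain q where q: "p = monom 1 (Polynomial.order 0 p) * q"
    using monom_1_dvd_iff[OF assms] by blast
  with assms have "q \<noteq> 0"
    by auto
  have "Polynomial.order 0 p = Polynomial.order 0 p + Polynomial.order 0 q"
    using q assms by (metis order_0_monom order_mult one_neq_zero)
  with \<open>q \<noteq> 0\<close> have "poly q 0 \<noteq> 0"
    by (simp add: order_root)
  then show ?thesis
    by (subst q) (simp add: coeff_monom_mult poly_0_coeff_0)
qed

section \<open>Trace and spectrum of square matrices\<close>

definition mat_trace :: "'a::comm_ring_1 mat \<Rightarrow> 'a" where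
  "mat_trace A = (\<Sum>i<dim_row A. A $$ (i, i))"

lemma mat_trace_mult_comm:
  fixes X Y :: "'a::comm_ring_1 mat"
  assumes X: "X \<in> carrier_mat n m" and Y: "Y \<in> carrier_mat m n"
  shows "mat_trace (X * Y) = mat_trace (Y * X)"
proof -
  have "mat_trace (X * Y) = (\<Sum>i<n. \<Sum>j<m. X $$ (i, j) * Y $$ (j, i))"
    using X Y by (simp add: mat_trace_def scalar_prod_def atLeast0LessThan)
  also have "\<dots> = (\<Sum>j<m. \<Sum>i<n. Y $$ (j, i) * X $$ (i, j))"
    by (subst sum.swap) (simp add: mult.commute)
  also have "\<dots> = mat_trace (Y * X)"
    using X Y by (simp add: mat_trace_def scalar_prod_def atLeast0LessThan)
  finally show ?thesis .
qed

lemma mat_trace_similar: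
  fixes A B :: "'a::comm_ring_1 mat"
  assumes "similar_mat A B"
  shows "mat_trace A = mat_trace B"
proof -
  obtain n P Q where carrier: "{A, B, P, Q} \<subseteq> carrier_mat n n"
    and QP: "Q * P = 1\<^sub>m n" and A: "A = P * B * Q"
    using similar_matD[OF assms] by blast
  then have "mat_trace A = mat_trace (P * (B * Q))"
    by (simp add: assoc_mult_mat[of _ n n _ n _ n])
  also have "\<dots> = mat_trace (B * Q * P)"
    using carrier by (intro mat_trace_mult_comm) auto
  also have "B * Q * P = B"
    using carrier QP by (auto simp: assoc_mult_mat[of _ n n _ n _ n])
  finally show ?thesis .
qed

lemma mat_trace_upper_triangular_square:
  fixes B :: "'a::comm_ring_1 mat"
  assumes B: "B \<in> carrier_mat n n" and ut: "upper_triangular B"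
  shows "mat_trace (B * B) = sum_list (map (\<lambda>x. x\<^sup>2) (diag_mat B))"
proof -
  have entry: "B $$ (i, j) * B $$ (j, i) = (if j = i then (B $$ (i, i))\<^sup>2 else 0)"
    if "i < n" "j < n" for i j
    using ut B that by (cases i j rule: linorder_cases) (auto simp: upper_triangular_def power2_eq_square)
  have "mat_trace (B * B) = (\<Sum>i<n. \<Sum>j<n. B $$ (i, j) * B $$ (j, i))"
    using B by (simp add: mat_trace_def scalar_prod_def atLeast0LessThan)
  also have "\<dots> = (\<Sum>i<n. (B $$ (i, i))\<^sup>2)"
    by (simp add: entry)
  also have "\<dots> = sum_list (map (\<lambda>x. x\<^sup>2) (diag_mat B))"
    using B by (simp add: diag_mat_def sum_list_sum_nth atLeast0LessThan)
  finally show ?thesis .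
qed

lemma sum_squares_eigenvalues_eq_mat_trace:
  fixes A :: "'a::conjugatable_ordered_field mat"
  assumes A: "A \<in> carrier_mat n n" and char: "char_poly A = (\<Prod>a\<leftarrow>es. [:- a, 1:])"
  shows "sum_list (map (\<lambda>x. x\<^sup>2) es) = mat_trace (A * A)"
proof -
  obtain B P Q where schur: "schur_decomposition A es = (B, P, Q)"
    by (metis prod_cases3)
  then have sim: "similar_mat_wit A B P Q" and ut: "upper_triangular B" and diag: "diag_mat B = es"
    using schur_decomposition[OF A char] by auto
  have B: "B \<in> carrier_mat n n"
    using similar_mat_witD2[OF A sim] by simp
  have "similar_mat_wit (A ^\<^sub>m 2) (B ^\<^sub>m 2) P Q"
    by (rule similar_mat_wit_pow[OF sim])
  then have "similar_mat (A * A) (B * B)"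
    using A B by (auto simp: similar_mat_def numeral_2_eq_2)
  then have "mat_trace (A * A) = mat_trace (B * B)"
    by (rule mat_trace_similar)
  then show ?thesis
    using mat_trace_upper_triangular_square[OF B ut] diag by simp
qed

lemma char_poly_uminus_linear_factors:
  fixes A :: "'a::conjugatable_ordered_field mat"
  assumes A: "A \<in> carrier_mat n n" and char: "char_poly A = (\<Prod>a\<leftarrow>es. [:- a, 1:])"
  shows "char_poly (- A) = (\<Prod>a\<leftarrow>map uminus es. [:- a, 1:])"
proof -
  obtain B P Q where schur: "schur_decomposition A es = (B, P, Q)"
    by (metis prod_cases3)
  then have sim: "similar_mat_wit A B P Q" and ut: "upper_triangular B" and diag: "diag_mat B = es"
    using schur_decomposition[OF A char] by auto
  have B: "B \<in> carrier_mat n n" and P: "P \<in> carrier_mat n n" and Q: "Q \<in> carrier_mat n n"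
    and PQ: "P * Q = 1\<^sub>m n" and QP: "Q * P = 1\<^sub>m n" and AB: "A = P * B * Q"
    using similar_mat_witD2[OF A sim] by auto
  have "- A = P * (- B) * Q"
    using AB B P Q by simp
  then have "similar_mat (- A) (- B)"
    by (intro similar_matI[of _ _ P Q n]) (use A B P Q PQ QP in auto)
  then have "char_poly (- A) = char_poly (- B)"
    by (rule char_poly_similar)
  also have "\<dots> = (\<Prod>a\<leftarrow>diag_mat (- B). [:- a, 1:])"
    using B ut by (intro char_poly_upper_triangular) (auto simp: upper_triangular_def)
  also have "diag_mat (- B) = map uminus es"
    using B diag by (auto simp: diag_mat_def)
  finally show ?thesis .
qed

lemma eigenvalues_symmetric_if_similar_uminus:
  fixes A :: "'a::conjugatable_ordered_field mat"
  assumes A: "A \<in> carrier_mat n n" and char: "char_poly A = (\<Prod>a\<leftarrow>es. [:- a, 1:])"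
    and similar: "similar_mat (- A) A"
  shows "mset (map uminus es) = mset es"
proof (rule mset_eq_if_prod_linear_factors_eq)
  have "(\<Prod>a\<leftarrow>map uminus es. [:- a, 1:]) = char_poly (- A)"
    by (rule char_poly_uminus_linear_factors[OF A char, symmetric])
  also have "\<dots> = char_poly A"
    by (rule char_poly_similar[OF similar])
  finally show "(\<Prod>a\<leftarrow>map uminus es. [:- a, 1:]) = (\<Prod>a\<leftarrow>es. [:- a, 1:])"
    using char by simp
qed

lemma similar_mat_uminus_if_bipartite:
  fixes A :: "'a::comm_ring_1 mat" and c :: "nat \<Rightarrow> bool"
  assumes A: "A \<in> carrier_mat n n"
    and bipartite: "\<And>i j. i < n \<Longrightarrow> j < n \<Longrightarrow> A $$ (i, j) \<noteq> 0 \<Longrightarrow> c i \<noteq> c j"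
  shows "similar_mat (- A) A"
proof -
  define D where "D = mat_diag n (\<lambda>i. if c i then 1 else - 1 :: 'a)"
  have D: "D \<in> carrier_mat n n"
    by (simp add: D_def)
  have "D * D = mat_diag n (\<lambda>_. 1)"
    unfolding D_def mat_diag_diag by (intro arg_cong[where f = "mat_diag n"]) auto
  then have DD: "D * D = 1\<^sub>m n"
    by simp
  have "D * A * D = - A"
  proof (rule eq_matI)
    fix i j
    assume "i < dim_row (- A)" "j < dim_col (- A)"
    then have ij: "i < n" "j < n"
      using A by auto
    then show "(D * A * D) $$ (i, j) = (- A) $$ (i, j)"
      using A bipartite[OF ij] unfolding D_def
      by (cases "A $$ (i, j) = 0") (auto simp: mat_diag_mult_left[OF A] mat_diag_mult_right[of _ n n])
  qed (use A D in auto)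
  then show ?thesis
    by (intro similar_matI[of _ _ D D n]) (use A D DD in auto)
qed

interpretation of_real_poly_hom: map_poly_inj_idom_hom "of_real :: real \<Rightarrow> complex" ..

lemma cnj_quadratic_form_real_symmetric:
  fixes A :: "real mat" and v :: "complex vec"
  assumes A: "A \<in> carrier_mat n n" and symmetric: "transpose_mat A = A"
  defines "Q \<equiv> (\<Sum>i<n. cnj (v $ i) * (\<Sum>j<n. of_real (A $$ (i, j)) * v $ j))"
  shows "cnj Q = Q"
proof -
  have entry: "A $$ (j, i) = A $$ (i, j)" if "i < n" "j < n" for i j
    using arg_cong[OF symmetric, of "\<lambda>M. M $$ (i, j)"] A that by simp
  have "cnj Q = (\<Sum>i<n. \<Sum>j<n. v $ i * of_real (A $$ (i, j)) * cnj (v $ j))"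
    unfolding Q_def cnj_sum by (simp add: sum_distrib_left mult.assoc)
  also have "\<dots> = Q"
    unfolding Q_def sum_distrib_left
    by (subst sum.swap) (intro sum.cong refl, simp add: entry mult.commute mult.left_commute)
  finally show ?thesis .
qed

lemma eigenvalue_of_real_symmetric_is_real:
  fixes A :: "real mat" and a :: complex
  assumes A: "A \<in> carrier_mat n n"
    and symmetric: "transpose_mat A = A"
    and eigen: "eigenvalue (map_mat complex_of_real A) a"
  shows "a \<in> \<real>"
proof -
  obtain v where v: "v \<in> carrier_vec n" "v \<noteq> 0\<^sub>v n" "map_mat complex_of_real A *\<^sub>v v = a \<cdot>\<^sub>v v"
    using eigen A unfolding eigenvalue_def eigenvector_def by auto
  have Av: "(\<Sum>j<n. of_real (A $$ (i, j)) * v $ j) = a * v $ i" if "i < n" for i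
  proof -
    have "(map_mat complex_of_real A *\<^sub>v v) $ i = (\<Sum>j<n. of_real (A $$ (i, j)) * v $ j)"
      using that A v(1) by (simp add: scalar_prod_def atLeast0LessThan)
    then show ?thesis
      using v(1,3) that by simp
  qed
  define S where "S = (\<Sum>i<n. cnj (v $ i) * v $ i)"
  have "(\<Sum>i<n. cnj (v $ i) * (\<Sum>j<n. of_real (A $$ (i, j)) * v $ j)) =
      (\<Sum>i<n. cnj (v $ i) * (a * v $ i))"
    by (intro sum.cong) (simp_all add: Av)
  also have "\<dots> = a * S"
    unfolding S_def sum_distrib_left by (simp add: mult.left_commute)
  finally have "(\<Sum>i<n. cnj (v $ i) * (\<Sum>j<n. of_real (A $$ (i, j)) * v $ j)) = a * S" .
  with cnj_quadratic_form_real_symmetric[OF A symmetric, of v] have "cnj (a * S) = a * S"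
    by simp
  have S: "S = of_real (\<Sum>i<n. (cmod (v $ i))\<^sup>2)"
    unfolding S_def of_real_sum by (intro sum.cong refl) (metis complex_norm_square mult.commute)
  have "S \<noteq> 0"
  proof
    assume "S = 0"
    then have "\<forall>i\<in>{..<n}. (cmod (v $ i))\<^sup>2 = 0"
      unfolding S of_real_eq_0_iff by (subst (asm) sum_nonneg_eq_0_iff) auto
    then have "v = 0\<^sub>v n"
      using v(1) by (intro eq_vecI) auto
    with v(2) show False ..
  qed
  moreover have "cnj a * S = a * S"
    using \<open>cnj (a * S) = a * S\<close> S by (metis complex_cnj_mult complex_cnj_complex_of_real)
  ultimately have "cnj a = a"
    by simp
  then show "a \<in> \<real>"
    by (simp only: Reals_cnj_iff)
qed

lemma char_poly_real_symmetric_splits: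
  fixes A :: "real mat"
  assumes A: "A \<in> carrier_mat n n"
    and symmetric: "transpose_mat A = A"
  obtains es where "char_poly A = (\<Prod>a\<leftarrow>es. [:- a, 1:])"
proof -
  let ?C = "map_mat complex_of_real A"
  obtain cs where cs: "char_poly ?C = (\<Prod>a\<leftarrow>cs. [:- a, 1:])"
    using char_poly_factorized[of ?C n] A by auto
  have "a \<in> \<real>" if "a \<in> set cs" for a
  proof (rule eigenvalue_of_real_symmetric_is_real[OF A symmetric])
    have "poly (char_poly ?C) a = 0"
      unfolding cs using that by (rule linear_poly_root)
    then show "eigenvalue ?C a"
      using eigenvalue_root_char_poly[of ?C n] A by simp
  qed
  then have cs_real: "cs = map complex_of_real (map Re cs)"
    by (intro nth_equalityI) (auto simp: complex_eq_iff Reals_def)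
  have "map_poly complex_of_real (char_poly A) = char_poly ?C"
    by (rule of_real_hom.char_poly_hom[OF A, symmetric])
  also have "\<dots> = map_poly complex_of_real (\<Prod>a\<leftarrow>map Re cs. [:- a, 1:])"
    by (subst cs, subst cs_real) (simp add: of_real_poly_hom.hom_prod_list comp_def)
  finally have "char_poly A = (\<Prod>a\<leftarrow>map Re cs. [:- a, 1:])"
    by simp
  then show ?thesis
    by (rule that)
qed

lemma eigenvalues_desc_real_symmetric:
  fixes A :: "real mat"
  assumes A: "A \<in> carrier_mat n n"
    and symmetric: "transpose_mat A = A"
  shows "length (eigenvalues_desc A) = n"
    and "sorted_wrt (\<ge>) (eigenvalues_desc A)"
    and "char_poly A = (\<Prod>a\<leftarrow>eigenvalues_desc A. [:- a, 1:])"
proof -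
  obtain es where es: "char_poly A = (\<Prod>a\<leftarrow>es. [:- a, 1:])"
    using char_poly_real_symmetric_splits[OF A symmetric] .
  define ls where "ls = rev (sort es)"
  have "mset (map (\<lambda>a. [:- a, 1:]) ls) = mset (map (\<lambda>a. [:- a, 1:]) es)"
    by (simp add: ls_def)
  then have "(\<Prod>a\<leftarrow>ls. [:- a, 1:]) = (\<Prod>a\<leftarrow>es. [:- a, 1:])"
    by (metis prod_mset_prod_list)
  with es have char: "char_poly A = (\<Prod>a\<leftarrow>ls. [:- a, 1:])"
    by simp
  have "length ls = n"
    using degree_monic_char_poly[OF A] unfolding char degree_linear_factors by simp
  moreover have "sorted_wrt (\<ge>) ls"
    by (simp add: ls_def sorted_wrt_rev)
  ultimately have "\<exists>ls. length ls = dim_row A \<and> sorted_wrt (\<ge>) ls \<and>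
      char_poly A = (\<Prod>a\<leftarrow>ls. [:- a, 1:])"
    using A char by auto
  then have "length (eigenvalues_desc A) = dim_row A \<and> sorted_wrt (\<ge>) (eigenvalues_desc A) \<and>
      char_poly A = (\<Prod>a\<leftarrow>eigenvalues_desc A. [:- a, 1:])"
    unfolding eigenvalues_desc_def by (rule someI_ex)
  then show "length (eigenvalues_desc A) = n"
    and "sorted_wrt (\<ge>) (eigenvalues_desc A)"
    and "char_poly A = (\<Prod>a\<leftarrow>eigenvalues_desc A. [:- a, 1:])"
    using A by auto
qed

section \<open>Trees are bipartite\<close>

definition proper_2_coloring :: "'a set set \<Rightarrow> ('a \<Rightarrow> bool) \<Rightarrow> bool" where
  "proper_2_coloring E c \<longleftrightarrow> (\<forall>a b. {a, b} \<in> E \<longrightarrow> c a \<noteq> c b)"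

text \<open>Trees on an arbitrary finite vertex set, so that deleting a leaf stays within the notion.\<close>

definition tree_on :: "'a set \<Rightarrow> 'a set set \<Rightarrow> bool" where
  "tree_on V E \<longleftrightarrow> finite V \<and> V \<noteq> {} \<and> (\<forall>e\<in>E. \<exists>a\<in>V. \<exists>b\<in>V. a \<noteq> b \<and> e = {a, b}) \<and>
     (\<forall>u\<in>V. \<forall>w\<in>V. (\<lambda>x y. {x, y} \<in> E)\<^sup>*\<^sup>* u w) \<and> card E = card V - 1"

lemma finite_edges:
  assumes "finite V" and "\<forall>e\<in>E. \<exists>a\<in>V. \<exists>b\<in>V. a \<noteq> b \<and> e = {a, b}"
  shows "finite E"
proof (rule finite_subset)
  show "E \<subseteq> Pow V"
    using assms(2) by fastforce
  show "finite (Pow V)"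
    using assms(1) by simp
qed

lemma sum_degree_eq_twice_card_edges:
  assumes V: "finite V" and edges: "\<forall>e\<in>E. \<exists>a\<in>V. \<exists>b\<in>V. a \<noteq> b \<and> e = {a, b}"
  shows "(\<Sum>v\<in>V. card {e\<in>E. v \<in> e}) = 2 * card E"
proof -
  have E: "finite E"
    using V edges by (rule finite_edges)
  have "(\<Sum>v\<in>V. card {e\<in>E. v \<in> e}) = (\<Sum>v\<in>V. \<Sum>e\<in>E. if v \<in> e then 1 else 0)"
    by (intro sum.cong refl) (simp add: E sum.inter_filter[symmetric])
  also have "\<dots> = (\<Sum>e\<in>E. \<Sum>v\<in>V. if v \<in> e then 1 else 0)"
    by (rule sum.swap)
  also have "\<dots> = (\<Sum>e\<in>E. 2)"
  proof (rule sum.cong[OF refl])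
    fix e
    assume "e \<in> E"
    then obtain a b where "a \<in> V" "b \<in> V" "a \<noteq> b" "e = {a, b}"
      using edges by blast
    then have "{v\<in>V. v \<in> e} = {a, b}"
      by auto
    then show "(\<Sum>v\<in>V. if v \<in> e then 1 else 0) = (2::nat)"
      using V \<open>a \<noteq> b\<close> by (simp add: sum.inter_filter[symmetric])
  qed
  finally show ?thesis
    by simp
qed

lemma tree_on_low_degree_vertex:
  assumes tree: "tree_on V E" and two: "2 \<le> card V"
  obtains v where "v \<in> V" "card {e\<in>E. v \<in> e} \<le> 1"
proof -
  have V: "finite V" and edges: "\<forall>e\<in>E. \<exists>a\<in>V. \<exists>b\<in>V. a \<noteq> b \<and> e = {a, b}"
    and card_E: "card E = card V - 1"
    using tree by (auto simp: tree_on_def)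
  show ?thesis
  proof (rule ccontr)
    assume "\<not> thesis"
    with that have "(\<Sum>v\<in>V. 2) \<le> (\<Sum>v\<in>V. card {e\<in>E. v \<in> e})"
      by (intro sum_mono) force
    then show False
      using sum_degree_eq_twice_card_edges[OF V edges] card_E two by simp
  qed
qed

lemma tree_on_leaf_exists:
  assumes tree: "tree_on V E" and two: "2 \<le> card V"
  obtains v u where "v \<in> V" "u \<in> V" "u \<noteq> v" "{e\<in>E. v \<in> e} = {{v, u}}"
proof -
  have V: "finite V" and edges: "\<forall>e\<in>E. \<exists>a\<in>V. \<exists>b\<in>V. a \<noteq> b \<and> e = {a, b}"
    and conn: "\<forall>u\<in>V. \<forall>w\<in>V. (\<lambda>x y. {x, y} \<in> E)\<^sup>*\<^sup>* u w"
    using tree by (auto simp: tree_on_def)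
  obtain v where v: "v \<in> V" and degree: "card {e\<in>E. v \<in> e} \<le> 1"
    using tree_on_low_degree_vertex[OF tree two] .
  have "card (V - {v}) \<noteq> 0"
    using two v V by simp
  then obtain w where "w \<in> V - {v}"
    by (metis card.empty ex_in_conv)
  then have w: "w \<in> V" "w \<noteq> v"
    by auto
  have "(\<lambda>x y. {x, y} \<in> E)\<^sup>*\<^sup>* v w"
    using conn v w(1) by blast
  then obtain u where vu: "{v, u} \<in> E"
    using w(2) by (cases rule: converse_rtranclpE) auto
  then obtain a b where "a \<in> V" "b \<in> V" "a \<noteq> b" "{v, u} = {a, b}"
    using edges by blast
  then have "u \<in> V" "u \<noteq> v"
    by (auto simp: doubleton_eq_iff)
  moreover have "{e\<in>E. v \<in> e} = {{v, u}}"
  proof -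
    have "finite {e\<in>E. v \<in> e}"
      using V edges by (simp add: finite_edges)
    then have single: "\<forall>e\<in>{e\<in>E. v \<in> e}. \<forall>e'\<in>{e\<in>E. v \<in> e}. e = e'"
      using degree card_le_Suc0_iff_eq by auto
    have "{v, u} \<in> {e\<in>E. v \<in> e}"
      using vu by simp
    then show ?thesis
      using single by (intro equalityI subsetI) auto
  qed
  ultimately show ?thesis
    by (rule that[OF v])
qed

lemma rtranclp_avoiding_leaf:
  assumes leaf: "{e\<in>E. v \<in> e} = {{v, u}}" and "u \<noteq> v"
    and path: "(\<lambda>x y. {x, y} \<in> E)\<^sup>*\<^sup>* x y" and "x \<noteq> v" and "y \<noteq> v"
  shows "(\<lambda>x y. {x, y} \<in> E - {{v, u}})\<^sup>*\<^sup>* x y"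
proof -
  let ?R = "\<lambda>x y. {x, y} \<in> E - {{v, u}}"
  have at_leaf: "e = {v, u}" if "e \<in> E" "v \<in> e" for e
    using leaf that by blast
  have "(y \<noteq> v \<longrightarrow> ?R\<^sup>*\<^sup>* x y) \<and> (y = v \<longrightarrow> ?R\<^sup>*\<^sup>* x u)"
    using path
  proof (induction rule: rtranclp_induct)
    case base
    then show ?case
      using \<open>x \<noteq> v\<close> by simp
  next
    case (step y z)
    consider "y = v" "z = v" | "y = v" "z \<noteq> v" | "y \<noteq> v" "z = v" | "y \<noteq> v" "z \<noteq> v"
      by blast
    then show ?case
    proof cases
      case 1
      then have "{v} = {v, u}"
        using at_leaf step.hyps(2) by simp
      with \<open>u \<noteq> v\<close> show ?thesis
        by (simp add: doubleton_eq_iff)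
    next
      case 2
      then have "z = u"
        using at_leaf[OF step.hyps(2)] by (simp add: doubleton_eq_iff)
      with 2 step.IH show ?thesis
        by simp
    next
      case 3
      then have "y = u"
        using at_leaf[OF step.hyps(2)] by (simp add: doubleton_eq_iff)
      with 3 step.IH show ?thesis
        by simp
    next
      case 4
      then have "?R y z"
        using step.hyps(2) by auto
      with 4 step.IH show ?thesis
        by (simp add: rtranclp.rtrancl_into_rtrancl)
    qed
  qed
  with \<open>y \<noteq> v\<close> show ?thesis
    by simp
qed

lemma tree_on_remove_leaf:
  assumes tree: "tree_on V E" and v: "v \<in> V" and u: "u \<in> V" "u \<noteq> v"
    and leaf: "{e\<in>E. v \<in> e} = {{v, u}}"
  shows "tree_on (V - {v}) (E - {{v, u}})"
proof -
  have V: "finite V" and edges: "\<forall>e\<in>E. \<exists>a\<in>V. \<exists>b\<in>V. a \<noteq> b \<and> e = {a, b}"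
    and conn: "\<forall>u\<in>V. \<forall>w\<in>V. (\<lambda>x y. {x, y} \<in> E)\<^sup>*\<^sup>* u w"
    and card_E: "card E = card V - 1"
    using tree by (auto simp: tree_on_def)
  have "finite E"
    using V edges by (rule finite_edges)
  moreover have "{v, u} \<in> E"
    using leaf by blast
  ultimately have "card (E - {{v, u}}) = card (V - {v}) - 1"
    using card_E v by simp
  moreover have "\<exists>a\<in>V - {v}. \<exists>b\<in>V - {v}. a \<noteq> b \<and> e = {a, b}"
    if e_in: "e \<in> E - {{v, u}}" for e
  proof -
    have "v \<notin> e"
    proof
      assume "v \<in> e"
      with e_in have "e \<in> {e\<in>E. v \<in> e}" "e \<noteq> {v, u}"
        by auto
      with leaf show False
        by simp
    qed
    from e_in have "e \<in> E"
      by simp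
    then obtain a b where "a \<in> V" "b \<in> V" "a \<noteq> b" and e: "e = {a, b}"
      using edges by blast
    with \<open>v \<notin> e\<close> have "a \<in> V - {v}" "b \<in> V - {v}"
      by auto
    with \<open>a \<noteq> b\<close> e show ?thesis
      by blast
  qed
  moreover have "(\<lambda>x y. {x, y} \<in> E - {{v, u}})\<^sup>*\<^sup>* a b"
    if "a \<in> V - {v}" "b \<in> V - {v}" for a b
    using that conn u(2) by (intro rtranclp_avoiding_leaf[OF leaf]) auto
  ultimately show ?thesis
    using V u unfolding tree_on_def by blast
qed

lemma proper_2_coloring_add_leaf:
  assumes coloring: "proper_2_coloring (E - {{v, u}}) c"
    and leaf: "{e\<in>E. v \<in> e} = {{v, u}}" and "u \<noteq> v"
  shows "proper_2_coloring E (c(v := \<not> c u))"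
  unfolding proper_2_coloring_def
proof (intro allI impI)
  fix a b
  assume ab: "{a, b} \<in> E"
  show "(c(v := \<not> c u)) a \<noteq> (c(v := \<not> c u)) b"
  proof (cases "{a, b} = {v, u}")
    case True
    with \<open>u \<noteq> v\<close> show ?thesis
      by (auto simp: doubleton_eq_iff)
  next
    case False
    then have "{a, b} \<notin> {e\<in>E. v \<in> e}"
      using leaf by simp
    with ab have "a \<noteq> v" "b \<noteq> v"
      by auto
    with False ab coloring show ?thesis
      by (simp add: proper_2_coloring_def)
  qed
qed

lemma tree_on_proper_2_coloring:
  assumes "tree_on V E"
  obtains c where "proper_2_coloring E c"
  using assms
proof (induction "card V" arbitrary: V E thesis rule: less_induct)
  case less
  have V: "finite V" "V \<noteq> {}" and edges: "\<forall>e\<in>E. \<exists>a\<in>V. \<exists>b\<in>V. a \<noteq> b \<and> e = {a, b}"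
    and card_E: "card E = card V - 1"
    using less.prems(2) by (auto simp: tree_on_def)
  show thesis
  proof (cases "card V = 1")
    case True
    then have "E = {}"
      using card_E finite_edges[OF V(1) edges] by simp
    then show thesis
      by (intro less.prems(1)) (simp add: proper_2_coloring_def)
  next
    case False
    moreover have "card V \<noteq> 0"
      using V by simp
    ultimately have "2 \<le> card V"
      by linarith
    then obtain v u where v: "v \<in> V" and u: "u \<in> V" "u \<noteq> v"
      and leaf: "{e\<in>E. v \<in> e} = {{v, u}}"
      using tree_on_leaf_exists[OF less.prems(2)] by metis
    have "card (V - {v}) < card V"
      using V v by (simp add: card_gt_0_iff)
    then obtain c where "proper_2_coloring (E - {{v, u}}) c"
      using less.hyps tree_on_remove_leaf[OF less.prems(2) v u leaf] by metis
    then show thesis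
      using proper_2_coloring_add_leaf[OF _ leaf u(2)] less.prems(1) by blast
  qed
qed

lemma is_tree_imp_tree_on:
  assumes "is_tree n E"
  shows "tree_on {..<n} E"
  using assms unfolding is_tree_def tree_on_def simple_graph_def graph_connected_def
  by (auto simp: lessThan_empty_iff Bex_def)

section \<open>Nonzero eigenvalues and matchings\<close>

lemma card_le_matching_number:
  assumes "finite E" and "is_matching E M"
  shows "card M \<le> matching_number E"
proof -
  have "{M. is_matching E M} \<subseteq> Pow E"
    by (auto simp: is_matching_def)
  then have "finite {M. is_matching E M}"
    using assms(1) by (rule finite_subset[OF _ finite_Pow_iff[THEN iffD2]])
  then show ?thesis
    unfolding matching_number_def using assms(2) by (intro Max_ge) auto
qed

lemma card_moved_color_class_le_matching_number:
  fixes p :: "nat \<Rightarrow> nat"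
  assumes E: "finite E" and p: "inj p"
    and moved_edge: "\<And>i. i \<in> S \<Longrightarrow> p i \<noteq> i \<Longrightarrow> {i, p i} \<in> E"
    and coloring: "proper_2_coloring E c"
  shows "card {i\<in>S. p i \<noteq> i \<and> c i = b} \<le> matching_number E"
proof -
  define X where "X = {i\<in>S. p i \<noteq> i \<and> c i = b}"
  have edge: "{i, p i} \<in> E" and color: "c i = b" "c (p i) \<noteq> b" if "i \<in> X" for i
    using that moved_edge coloring by (auto simp: X_def proper_2_coloring_def)
  have inj: "inj_on (\<lambda>i. {i, p i}) X"
  proof (rule inj_onI)
    fix i j
    assume "i \<in> X" "j \<in> X" "{i, p i} = {j, p j}"
    then show "i = j"
      using color by (metis doubleton_eq_iff)
  qed
  have "is_matching E ((\<lambda>i. {i, p i}) ` X)"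
    unfolding is_matching_def
  proof (intro conjI ballI impI)
    show "(\<lambda>i. {i, p i}) ` X \<subseteq> E"
      using edge by blast
    fix e f
    assume "e \<in> (\<lambda>i. {i, p i}) ` X" "f \<in> (\<lambda>i. {i, p i}) ` X" "e \<noteq> f"
    then obtain i j where ij: "i \<in> X" "j \<in> X" "i \<noteq> j" and "e = {i, p i}" "f = {j, p j}"
      by blast
    moreover have "p i \<noteq> p j"
      using ij p by (meson injD)
    moreover have "i \<noteq> p j" "p i \<noteq> j"
      using color ij by metis+
    ultimately show "e \<inter> f = {}"
      by auto
  qed
  then have "card ((\<lambda>i. {i, p i}) ` X) \<le> matching_number E"
    by (rule card_le_matching_number[OF E])
  then have "card X \<le> matching_number E"
    by (simp only: card_image[OF inj])
  then show ?thesis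
    unfolding X_def .
qed

lemma card_moved_le_matching_number:
  fixes p :: "nat \<Rightarrow> nat"
  assumes E: "finite E" and p: "inj p"
    and moved_edge: "\<And>i. i \<in> S \<Longrightarrow> p i \<noteq> i \<Longrightarrow> {i, p i} \<in> E"
    and coloring: "proper_2_coloring E c"
  shows "card {i\<in>S. p i \<noteq> i} \<le> 2 * matching_number E"
proof -
  have color_class: "card {i\<in>S. p i \<noteq> i \<and> c i = b} \<le> matching_number E" for b
    using E p moved_edge coloring by (rule card_moved_color_class_le_matching_number)
  have "card {i\<in>S. p i \<noteq> i} =
      card ({i\<in>S. p i \<noteq> i \<and> c i = True} \<union> {i\<in>S. p i \<noteq> i \<and> c i = False})"
    by (rule arg_cong[where f = card]) auto
  also have "\<dots> \<le> card {i\<in>S. p i \<noteq> i \<and> c i = True} + card {i\<in>S. p i \<noteq> i \<and> c i = False}"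
    by (rule card_Un_le)
  also have "\<dots> \<le> 2 * matching_number E"
    using color_class[of True] color_class[of False] by simp
  finally show ?thesis .
qed

lemma prod_char_poly_matrix_permutation:
  fixes A :: "'a::comm_ring_1 mat"
  assumes A: "A \<in> carrier_mat n n" and diag: "\<And>i. i < n \<Longrightarrow> A $$ (i, i) = 0"
    and p: "p permutes {0..<n}"
  shows "(\<Prod>i = 0..<n. char_poly_matrix A $$ (i, p i)) =
    monom (\<Prod>i\<in>{i\<in>{0..<n}. p i \<noteq> i}. - A $$ (i, p i)) (card {i\<in>{0..<n}. p i = i})"
proof -
  have "p i < n" if "i < n" for i
    using permutes_in_image[OF p] that by simp
  then have entry: "char_poly_matrix A $$ (i, p i) = (if p i = i then [:0, 1:] else [:- A $$ (i, p i):])"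
    if "i < n" for i
    using A diag that by (auto simp: char_poly_matrix_def)
  have "(\<Prod>i = 0..<n. char_poly_matrix A $$ (i, p i)) =
      (\<Prod>i = 0..<n. if p i = i then [:0, 1:] else [:- A $$ (i, p i):])"
    by (intro prod.cong refl) (simp add: entry)
  also have "\<dots> = [:0, 1:] ^ card {i\<in>{0..<n}. p i = i} *
      [:\<Prod>i\<in>{i\<in>{0..<n}. p i \<noteq> i}. - A $$ (i, p i):]"
    by (simp add: prod.If_cases Int_def prod_to_poly)
  finally show ?thesis
    by (simp add: monom_altdef)
qed

lemma coeff_char_poly_nonzero_imp_permutation:
  fixes A :: "'a::comm_ring_1 mat"
  assumes A: "A \<in> carrier_mat n n" and diag: "\<And>i. i < n \<Longrightarrow> A $$ (i, i) = 0"
    and coeff: "coeff (char_poly A) z \<noteq> 0"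
  obtains p where "p permutes {0..<n}" "card {i\<in>{0..<n}. p i \<noteq> i} = n - z"
    "\<And>i. i < n \<Longrightarrow> p i \<noteq> i \<Longrightarrow> A $$ (i, p i) \<noteq> 0"
proof -
  let ?term = "\<lambda>p. signof p * (\<Prod>i = 0..<n. char_poly_matrix A $$ (i, p i))"
  have expansion: "char_poly A = (\<Sum>p\<in>{p. p permutes {0..<n}}. ?term p)"
    unfolding char_poly_def by (rule det_def'[OF char_poly_matrix_closed[OF A]])
  have "(\<Sum>p\<in>{p. p permutes {0..<n}}. coeff (?term p) z) \<noteq> 0"
    using coeff unfolding expansion coeff_sum .
  then obtain p where p: "p permutes {0..<n}" and "coeff (?term p) z \<noteq> 0"
    by (auto elim: sum.not_neutral_contains_not_neutral)
  then have "coeff (monom (\<Prod>i\<in>{i\<in>{0..<n}. p i \<noteq> i}. - A $$ (i, p i))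
      (card {i\<in>{0..<n}. p i = i})) z \<noteq> 0"
    by (auto simp: prod_char_poly_matrix_permutation[OF A diag p] sign_def split: if_splits)
  then have fixed: "card {i\<in>{0..<n}. p i = i} = z"
    and nonzero: "(\<Prod>i\<in>{i\<in>{0..<n}. p i \<noteq> i}. - A $$ (i, p i)) \<noteq> 0"
    by (auto simp: coeff_monom split: if_splits)
  have "{i\<in>{0..<n}. p i \<noteq> i} = {0..<n} - {i\<in>{0..<n}. p i = i}"
    by auto
  also have "card \<dots> = n - card {i\<in>{0..<n}. p i = i}"
    by (subst card_Diff_subset) auto
  finally have "card {i\<in>{0..<n}. p i \<noteq> i} = n - z"
    by (simp only: fixed)
  moreover have "A $$ (i, p i) \<noteq> 0" if "i < n" "p i \<noteq> i" for i
  proof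
    assume "A $$ (i, p i) = 0"
    with that have "(\<Prod>i\<in>{i\<in>{0..<n}. p i \<noteq> i}. - A $$ (i, p i)) = 0"
      by (intro prod_zero) auto
    with nonzero show False ..
  qed
  ultimately show ?thesis
    by (rule that[OF p])
qed

section \<open>The spectrum of a tree\<close>

lemma adj_matrix_carrier [simp]: "adj_matrix n E \<in> carrier_mat n n"
  by (simp add: adj_matrix_def)

lemma adj_matrix_index:
  "i < n \<Longrightarrow> j < n \<Longrightarrow> adj_matrix n E $$ (i, j) = (if {i, j} \<in> E then 1 else 0)"
  by (simp add: adj_matrix_def)

lemma transpose_adj_matrix: "transpose_mat (adj_matrix n E) = adj_matrix n E"
  by (rule eq_matI) (auto simp: adj_matrix_def insert_commute)

lemma simple_graph_edges:
  assumes "simple_graph n E"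
  shows "\<forall>e\<in>E. \<exists>a\<in>{..<n}. \<exists>b\<in>{..<n}. a \<noteq> b \<and> e = {a, b}"
  using assms by (fastforce simp: simple_graph_def)

lemma adj_matrix_diag:
  assumes "simple_graph n E" and "i < n"
  shows "adj_matrix n E $$ (i, i) = 0"
proof -
  have "{i} \<notin> E"
    using assms(1) by (force simp: simple_graph_def doubleton_eq_iff)
  with assms(2) show ?thesis
    by (simp add: adj_matrix_index)
qed

lemma card_neighbors_eq_degree:
  assumes "simple_graph n E"
  shows "card {j. j < n \<and> {i, j} \<in> E} = card {e\<in>E. i \<in> e}"
proof -
  have image: "(\<lambda>j. {i, j}) ` {j. j < n \<and> {i, j} \<in> E} = {e\<in>E. i \<in> e}"
  proof (intro equalityI subsetI)
    fix e
    assume "e \<in> {e\<in>E. i \<in> e}"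
    moreover obtain a b where "a < n" "b < n" "e = {a, b}"
      using assms calculation by (auto simp: simple_graph_def)
    ultimately show "e \<in> (\<lambda>j. {i, j}) ` {j. j < n \<and> {i, j} \<in> E}"
      by (auto simp: insert_commute)
  qed auto
  have "inj_on (\<lambda>j. {i, j}) {j. j < n \<and> {i, j} \<in> E}"
    by (rule inj_onI) (auto simp: doubleton_eq_iff)
  from card_image[OF this] show ?thesis
    unfolding image by (rule sym)
qed

lemma mat_trace_adj_matrix_square:
  assumes simple: "simple_graph n E"
  shows "mat_trace (adj_matrix n E * adj_matrix n E) = 2 * card E"
proof -
  let ?A = "adj_matrix n E"
  have "mat_trace (?A * ?A) = (\<Sum>i<n. \<Sum>j<n. ?A $$ (i, j) * ?A $$ (j, i))"
    using carrier_matD[OF adj_matrix_carrier]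
    by (simp add: mat_trace_def scalar_prod_def atLeast0LessThan)
  also have "\<dots> = (\<Sum>i<n. real (card {j. j < n \<and> {i, j} \<in> E}))"
  proof (rule sum.cong[OF refl])
    fix i
    assume "i \<in> {..<n}"
    then have "(\<Sum>j<n. ?A $$ (i, j) * ?A $$ (j, i)) = (\<Sum>j<n. if {i, j} \<in> E then 1 else 0)"
      by (intro sum.cong refl) (simp add: adj_matrix_index insert_commute)
    also have "\<dots> = real (card {j. j < n \<and> {i, j} \<in> E})"
      by (simp add: sum.If_cases Int_def conj_commute lessThan_def)
    finally show "(\<Sum>j<n. ?A $$ (i, j) * ?A $$ (j, i)) = real (card {j. j < n \<and> {i, j} \<in> E})" .
  qed
  also have "\<dots> = real (\<Sum>i<n. card {e\<in>E. i \<in> e})"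
    using card_neighbors_eq_degree[OF simple] by simp
  also have "(\<Sum>i<n. card {e\<in>E. i \<in> e}) = 2 * card E"
    using sum_degree_eq_twice_card_edges[OF _ simple_graph_edges[OF simple]] by simp
  finally show ?thesis
    by simp
qed

lemma eigenvalues_adj_matrix_symmetric:
  assumes coloring: "proper_2_coloring E c"
    and char: "char_poly (adj_matrix n E) = (\<Prod>a\<leftarrow>es. [:- a, 1:])"
  shows "mset (map uminus es) = mset es"
proof (rule eigenvalues_symmetric_if_similar_uminus[OF adj_matrix_carrier char])
  show "similar_mat (- adj_matrix n E) (adj_matrix n E)"
    using coloring
    by (intro similar_mat_uminus_if_bipartite[of _ n c])
      (auto simp: adj_matrix_index proper_2_coloring_def split: if_splits)
qed

lemma nonzero_eigenvalues_adj_matrix_le: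
  assumes simple: "simple_graph n E" and coloring: "proper_2_coloring E c"
    and char: "char_poly (adj_matrix n E) = (\<Prod>a\<leftarrow>es. [:- a, 1:])"
  shows "length (filter (\<lambda>x. x \<noteq> 0) es) \<le> 2 * matching_number E"
proof -
  let ?A = "adj_matrix n E"
  have "length es = n"
    using degree_monic_char_poly[OF adj_matrix_carrier, of n E] by (simp add: char degree_linear_factors)
  have "char_poly ?A \<noteq> 0"
    unfolding char prod_list_zero_iff by auto
  moreover have "Polynomial.order 0 (char_poly ?A) = count (mset es) 0"
    unfolding char by (rule order_prod_linear_factors)
  ultimately have "coeff (char_poly ?A) (count (mset es) 0) \<noteq> 0"
    using coeff_order_0_nonzero by metis
  then obtain p where p: "p permutes {0..<n}"
    and moved: "card {i\<in>{0..<n}. p i \<noteq> i} = n - count (mset es) 0"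
    and nonzero: "\<And>i. i < n \<Longrightarrow> p i \<noteq> i \<Longrightarrow> ?A $$ (i, p i) \<noteq> 0"
    using coeff_char_poly_nonzero_imp_permutation[OF adj_matrix_carrier adj_matrix_diag[OF simple]]
    by blast
  have "{i, p i} \<in> E" if "i \<in> {0..<n}" "p i \<noteq> i" for i
    using nonzero[of i] that permutes_in_image[OF p, of i] by (auto simp: adj_matrix_index split: if_splits)
  then have "card {i\<in>{0..<n}. p i \<noteq> i} \<le> 2 * matching_number E"
    by (rule card_moved_le_matching_number[OF finite_edges[OF finite_lessThan simple_graph_edges[OF simple]]
          permutes_inj[OF p] _ coloring])
  then have "n - count (mset es) 0 \<le> 2 * matching_number E"
    unfolding moved .
  moreover have "count (mset es) 0 = length (filter (\<lambda>x. x = 0) es)"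
    by (induction es) auto
  then have "length (filter (\<lambda>x. x \<noteq> 0) es) = n - count (mset es) 0"
    using sum_length_filter_compl[of "\<lambda>x. x = 0" es] \<open>length es = n\<close> by simp
  ultimately show ?thesis
    by simp
qed

lemma tree_eigenvalues:
  assumes tree: "is_tree n E"
  defines "ls \<equiv> eigenvalues_desc (adj_matrix n E)"
  shows "length ls = n" and "sorted_wrt (\<ge>) ls"
    and "mset (map uminus ls) = mset ls"
    and "sum_list (map (\<lambda>x. x\<^sup>2) ls) = 2 * (real n - 1)"
    and "length (filter (\<lambda>x. x \<noteq> 0) ls) \<le> 2 * matching_number E"
proof -
  have simple: "simple_graph n E" and "1 \<le> n" "card E = n - 1"
    using tree by (auto simp: is_tree_def)
  note spec = eigenvalues_desc_real_symmetric[OF adj_matrix_carrier transpose_adj_matrix[of n E],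
      folded ls_def]
  obtain c where coloring: "proper_2_coloring E c"
    using tree_on_proper_2_coloring[OF is_tree_imp_tree_on[OF tree]] .
  show "length ls = n" and "sorted_wrt (\<ge>) ls"
    using spec(1,2) .
  show "mset (map uminus ls) = mset ls"
    by (rule eigenvalues_adj_matrix_symmetric[OF coloring spec(3)])
  show "length (filter (\<lambda>x. x \<noteq> 0) ls) \<le> 2 * matching_number E"
    by (rule nonzero_eigenvalues_adj_matrix_le[OF simple coloring spec(3)])
  have "sum_list (map (\<lambda>x. x\<^sup>2) ls) = 2 * card E"
    using sum_squares_eigenvalues_eq_mat_trace[OF adj_matrix_carrier spec(3)]
      mat_trace_adj_matrix_square[OF simple] by simp
  with \<open>1 \<le> n\<close> \<open>card E = n - 1\<close> show "sum_list (map (\<lambda>x. x\<^sup>2) ls) = 2 * (real n - 1)"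
    by (simp add: of_nat_diff)
qed

lemma S_k_tree_le:
  assumes "is_tree n E"
  shows "S_k k (adj_matrix n E) \<le> sqrt (real (min k (matching_number E)) * (real n - 1))"
proof -
  note eigen = tree_eigenvalues[OF assms]
  have "sum_list (map (\<lambda>x. x\<^sup>2) (eigenvalues_desc (adj_matrix n E))) \<le> 2 * (real n - 1)"
    using eigen(4) by (rule order_eq_refl)
  then show ?thesis
    unfolding S_k_def by (rule sum_list_take_le_sqrt[OF eigen(3) _ eigen(5)])
qed

lemma S_k_tree_complement:
  assumes "is_tree n E" and "k \<le> n"
  shows "S_k k (adj_matrix n E) = S_k (n - k) (adj_matrix n E)"
  unfolding S_k_def
  using sum_list_take_eq_sum_list_take_complement[OF tree_eigenvalues(2,3)[OF assms(1)]]
    tree_eigenvalues(1)[OF assms(1)] assms(2)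
  by metis

theorem corollary4p1:
  fixes n k :: nat and E :: "nat set set"
  assumes "is_tree n E"
    and "1 \<le> k" and "k \<le> n"
  shows "S_k k (adj_matrix n E) \<le>
    (if k \<le> matching_number E then sqrt (real k * (real n - 1))
     else if k \<le> n - matching_number E then sqrt (real (matching_number E) * (real n - 1))
     else sqrt (real (n - k) * (real n - 1)))"
proof -
  let ?A = "adj_matrix n E" and ?b = "matching_number E"
  have "S_k k ?A = S_k (n - k) ?A"
    using S_k_tree_complement[OF assms(1,3)] .
  also have "\<dots> \<le> sqrt (real (min (n - k) ?b) * (real n - 1))"
    using S_k_tree_le[OF assms(1)] .
  also have "\<dots> \<le> sqrt (real (n - k) * (real n - 1))"
    using assms(2,3) by (intro real_sqrt_le_mono mult_right_mono) auto
  finally have complement_bound: "S_k k ?A \<le> sqrt (real (n - k) * (real n - 1))" .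
  consider "k \<le> ?b" | "\<not> k \<le> ?b" "k \<le> n - ?b" | "\<not> k \<le> ?b" "\<not> k \<le> n - ?b"
    by blast
  then show ?thesis
  proof cases
    case 1
    then show ?thesis
      using S_k_tree_le[OF assms(1), of k] by (simp add: min_absorb1)
  next
    case 2
    then show ?thesis
      using S_k_tree_le[OF assms(1), of k] by (simp add: min_absorb2)
  next
    case 3
    then show ?thesis
      using complement_bound by simp
  qed
qed

end
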